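(* Let $n\ge 2$ and let $B$ be an $n\times n$ agreement matrix. If $0<H(X_B^+)\le H(Y_B^+)$, then $IA_\epsilon(B)$ exists and $$IA_\epsilon(B)=1+\frac{H(Y_B^+)-H((X_BY_B)^+)}{H(X_B^+)}.$$
   Context: An $n\times n$ agreement matrix $B$ has nonnegative entries $B[y][x]$ (row $y$, column $x$), not all zero. For any $n\times n$ matrix $M$ with nonnegative real entries not all zero, let $S_M=\sum_{y,x}M[y][x]$ and define random variables $X_M$ on $\{1,\dots,n\}$ with $P(X_M=x)=\sum_yM[y][x]/S_M$, $Y_M$ with $P(Y_M=y)=\sum_xM[y][x]/S_M$, and the joint variable $X_MY_M$ with $P(X_MY_M=(y,x))=M[y][x]/S_M$. $H$ is Shannon entropy in base 2, defined only when all probabilities are positive. The information agreement is $IA(M)=\frac{H(X_M)+H(Y_M)-H(X_MY_M)}{\min\{H(X_M),H(Y_M)\}}$. For $\epsilon>0$, the $0$-freed matrix $B_\epsilon$ is obtained from $B$ by replacing every zero entry by $\epsilon$; then $IA_\epsilon(B)=\lim_{\epsilon\to0^+}IA(B_\epsilon)$ (when this limit exists). For a random variable $Z$ on $\mathcal{Z}$, the refined variable $Z^+$ is $Z$ restricted to $\{z:p_Z(z)>0\}$ with the same probabilities, so $H(Z^+)=-\sum_{z:\,p_Z(z)>0}p_Z(z)\log_2p_Z(z)$. *)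

theory Defs
  imports Complex_Main
begin

text \<open>An n x n matrix is a function nat => nat => real, entry M y x is row y, column x,
  with indices ranging over {..<n} (a shift of 1..n).\<close>

definition agreement_matrix :: "nat \<Rightarrow> (nat \<Rightarrow> nat \<Rightarrow> real) \<Rightarrow> bool" where
  "agreement_matrix n B \<longleftrightarrow> (\<forall>y<n. \<forall>x<n. B y x \<ge> 0) \<and> (\<exists>y<n. \<exists>x<n. B y x \<noteq> 0)"

definition Ssum :: "nat \<Rightarrow> (nat \<Rightarrow> nat \<Rightarrow> real) \<Rightarrow> real" where
  "Ssum n M = (\<Sum>y<n. \<Sum>x<n. M y x)"

definition pX :: "nat \<Rightarrow> (nat \<Rightarrow> nat \<Rightarrow> real) \<Rightarrow> nat \<Rightarrow> real" where
  "pX n M x = (\<Sum>y<n. M y x) / Ssum n M"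

definition pY :: "nat \<Rightarrow> (nat \<Rightarrow> nat \<Rightarrow> real) \<Rightarrow> nat \<Rightarrow> real" where
  "pY n M y = (\<Sum>x<n. M y x) / Ssum n M"

definition pXY :: "nat \<Rightarrow> (nat \<Rightarrow> nat \<Rightarrow> real) \<Rightarrow> nat \<times> nat \<Rightarrow> real" where
  "pXY n M yx = M (fst yx) (snd yx) / Ssum n M"

text \<open>Shannon entropy (base 2) of a distribution p on a finite set A (used only when all
  probabilities are positive), and entropy of the refined variable Z^+.\<close>
definition entropy :: "'a set \<Rightarrow> ('a \<Rightarrow> real) \<Rightarrow> real" where
  "entropy A p = - (\<Sum>z\<in>A. p z * log 2 (p z))"

definition entropy_plus :: "'a set \<Rightarrow> ('a \<Rightarrow> real) \<Rightarrow> real" where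
  "entropy_plus A p = - (\<Sum>z\<in>{z\<in>A. p z > 0}. p z * log 2 (p z))"

definition HX :: "nat \<Rightarrow> (nat \<Rightarrow> nat \<Rightarrow> real) \<Rightarrow> real" where
  "HX n M = entropy {..<n} (pX n M)"
definition HY :: "nat \<Rightarrow> (nat \<Rightarrow> nat \<Rightarrow> real) \<Rightarrow> real" where
  "HY n M = entropy {..<n} (pY n M)"
definition HXY :: "nat \<Rightarrow> (nat \<Rightarrow> nat \<Rightarrow> real) \<Rightarrow> real" where
  "HXY n M = entropy ({..<n} \<times> {..<n}) (pXY n M)"

definition HX_plus :: "nat \<Rightarrow> (nat \<Rightarrow> nat \<Rightarrow> real) \<Rightarrow> real" where
  "HX_plus n M = entropy_plus {..<n} (pX n M)"
definition HY_plus :: "nat \<Rightarrow> (nat \<Rightarrow> nat \<Rightarrow> real) \<Rightarrow> real" where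
  "HY_plus n M = entropy_plus {..<n} (pY n M)"
definition HXY_plus :: "nat \<Rightarrow> (nat \<Rightarrow> nat \<Rightarrow> real) \<Rightarrow> real" where
  "HXY_plus n M = entropy_plus ({..<n} \<times> {..<n}) (pXY n M)"

definition IA :: "nat \<Rightarrow> (nat \<Rightarrow> nat \<Rightarrow> real) \<Rightarrow> real" where
  "IA n M = (HX n M + HY n M - HXY n M) / min (HX n M) (HY n M)"

definition zero_freed :: "(nat \<Rightarrow> nat \<Rightarrow> real) \<Rightarrow> real \<Rightarrow> nat \<Rightarrow> nat \<Rightarrow> real" where
  "zero_freed B \<epsilon> y x = (if B y x = 0 then \<epsilon> else B y x)"

end

theory Submission
  imports Defs "HOL-Real_Asymp.Real_Asymp"
begin

text \<open>
  As \<open>\<epsilon> \<rightarrow> 0\<^sup>+\<close>, every entry of \<open>B\<^sub>\<epsilon>\<close> is positive and tends to the corresponding entry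
  of \<open>B\<close>; hence the distributions of \<open>X\<close>, \<open>Y\<close> and \<open>XY\<close> for \<open>B\<^sub>\<epsilon>\<close> are positive and tend to
  those for \<open>B\<close>. Since \<open>t log t \<rightarrow> 0\<close> as \<open>t \<rightarrow> 0\<^sup>+\<close>, the entropy of a positive distribution
  converging to \<open>q\<close> tends to the entropy of the refined variable with distribution \<open>q\<close>: the
  vanishing probabilities simply drop out. So the three entropies of \<open>B\<^sub>\<epsilon>\<close> converge to the
  refined entropies of \<open>B\<close>, and by continuity \<open>IA(B\<^sub>\<epsilon>)\<close> tends to
  \<open>(H(X\<^sup>+) + H(Y\<^sup>+) - H((XY)\<^sup>+)) / H(X\<^sup>+)\<close>.
\<close>

lemma tendsto_mult_log:
  fixes f :: "'b \<Rightarrow> real"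
  assumes f: "(f \<longlongrightarrow> a) F" and pos: "eventually (\<lambda>x. f x > 0) F"
  shows "((\<lambda>x. f x * log 2 (f x)) \<longlongrightarrow> a * log 2 a) F"
proof (cases "F = bot")
  case False
  then have "a \<ge> 0"
    using pos by (intro tendsto_lowerbound[OF f]) (auto elim: eventually_mono)
  show ?thesis
  proof (cases "a > 0")
    case True
    then show ?thesis by (intro tendsto_intros f) auto
  next
    case False
    with \<open>a \<ge> 0\<close> have "a = 0" by simp
    have lim: "((\<lambda>t::real. t * log 2 t) \<longlongrightarrow> 0) (at_right 0)" by real_asymp
    have "filterlim f (at_right 0) F"
      using f pos \<open>a = 0\<close> by (auto simp: filterlim_at elim: eventually_mono)
    from filterlim_compose[OF lim this] show ?thesis
      using \<open>a = 0\<close> by simp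
  qed
qed simp

lemma entropy_plus_eq_entropy:
  assumes "finite A" "\<And>z. z \<in> A \<Longrightarrow> q z \<ge> 0"
  shows "entropy_plus A q = entropy A q"
  unfolding entropy_plus_def entropy_def
proof (intro arg_cong[where f = uminus] sum.mono_neutral_left[OF assms(1)] ballI)
  fix z assume "z \<in> A - {z \<in> A. q z > 0}"
  with assms(2) have "q z = 0" by force
  then show "q z * log 2 (q z) = 0" by simp
qed auto

lemma tendsto_entropy_entropy_plus:
  fixes p :: "'b \<Rightarrow> 'a \<Rightarrow> real"
  assumes "finite A"
    and p: "\<And>z. z \<in> A \<Longrightarrow> ((\<lambda>e. p e z) \<longlongrightarrow> q z) F"
    and pos: "\<And>z. z \<in> A \<Longrightarrow> eventually (\<lambda>e. p e z > 0) F"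
  shows "((\<lambda>e. entropy A (p e)) \<longlongrightarrow> entropy_plus A q) F"
proof (cases "F = bot")
  case False
  have "q z \<ge> 0" if "z \<in> A" for z
    using pos[OF that] False by (intro tendsto_lowerbound[OF p[OF that]]) (auto elim: eventually_mono)
  then have "entropy_plus A q = entropy A q"
    by (rule entropy_plus_eq_entropy[OF assms(1)])
  show ?thesis
    unfolding \<open>entropy_plus A q = entropy A q\<close> entropy_def
    by (intro tendsto_minus tendsto_sum tendsto_mult_log p pos)
qed simp

lemma eventually_sum_pos:
  fixes f :: "'b \<Rightarrow> 'a \<Rightarrow> real"
  assumes "finite A" "A \<noteq> {}" "\<And>a. a \<in> A \<Longrightarrow> eventually (\<lambda>e. f e a > 0) F"
  shows "eventually (\<lambda>e. sum (f e) A > 0) F"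
proof -
  have "eventually (\<lambda>e. \<forall>a\<in>A. f e a > 0) F"
    using assms by (intro eventually_ball_finite) auto
  then show ?thesis
    by (rule eventually_mono) (use assms(1,2) in \<open>auto intro!: sum_pos\<close>)
qed

context
  fixes n :: nat and B :: "nat \<Rightarrow> nat \<Rightarrow> real" and M :: "'b \<Rightarrow> nat \<Rightarrow> nat \<Rightarrow> real"
    and F :: "'b filter"
  assumes Ssum_pos: "Ssum n B > 0"
    and entries_tendsto: "\<And>y x. y < n \<Longrightarrow> x < n \<Longrightarrow> ((\<lambda>e. M e y x) \<longlongrightarrow> B y x) F"
    and entries_pos: "\<And>y x. y < n \<Longrightarrow> x < n \<Longrightarrow> eventually (\<lambda>e. M e y x > 0) F"
begin

private lemma n_pos: "n > 0"
  using Ssum_pos by (cases "n = 0") (auto simp: Ssum_def)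

private lemma Ssum_tendsto: "((\<lambda>e. Ssum n (M e)) \<longlongrightarrow> Ssum n B) F"
  unfolding Ssum_def by (intro tendsto_sum) (simp add: entries_tendsto)

private lemma eventually_Ssum_pos: "eventually (\<lambda>e. Ssum n (M e) > 0) F"
  using Ssum_tendsto Ssum_pos by (rule order_tendstoD)

private lemma tendsto_div_Ssum:
  assumes "(f \<longlongrightarrow> a) F"
  shows "((\<lambda>e. f e / Ssum n (M e)) \<longlongrightarrow> a / Ssum n B) F"
  using assms Ssum_tendsto Ssum_pos by (intro tendsto_divide) auto

private lemma eventually_div_Ssum_pos:
  assumes "eventually (\<lambda>e. f e > 0) F"
  shows "eventually (\<lambda>e. f e / Ssum n (M e) > (0::real)) F"
  using assms eventually_Ssum_pos by eventually_elim simp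

lemma tendsto_HX_HX_plus: "((\<lambda>e. HX n (M e)) \<longlongrightarrow> HX_plus n B) F"
  unfolding HX_def HX_plus_def pX_def using n_pos
  by (intro tendsto_entropy_entropy_plus tendsto_div_Ssum eventually_div_Ssum_pos
      tendsto_sum eventually_sum_pos entries_tendsto entries_pos) auto

lemma tendsto_HY_HY_plus: "((\<lambda>e. HY n (M e)) \<longlongrightarrow> HY_plus n B) F"
  unfolding HY_def HY_plus_def pY_def using n_pos
  by (intro tendsto_entropy_entropy_plus tendsto_div_Ssum eventually_div_Ssum_pos
      tendsto_sum eventually_sum_pos entries_tendsto entries_pos) auto

lemma tendsto_HXY_HXY_plus: "((\<lambda>e. HXY n (M e)) \<longlongrightarrow> HXY_plus n B) F"
  unfolding HXY_def HXY_plus_def pXY_def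
  by (intro tendsto_entropy_entropy_plus tendsto_div_Ssum eventually_div_Ssum_pos
      entries_tendsto entries_pos) auto

end

lemma tendsto_zero_freed: "((\<lambda>\<epsilon>. zero_freed B \<epsilon> y x) \<longlongrightarrow> B y x) (at_right 0)"
  by (cases "B y x = 0") (simp_all add: zero_freed_def)

lemma eventually_zero_freed_pos:
  assumes "B y x \<ge> 0"
  shows "eventually (\<lambda>\<epsilon>. zero_freed B \<epsilon> y x > 0) (at_right 0)"
  using eventually_at_right_less[of 0] assms
  by (auto simp: zero_freed_def less_le elim: eventually_mono)

lemma agreement_matrix_Ssum_pos:
  assumes "agreement_matrix n B"
  shows "Ssum n B > 0"
proof -
  have nonneg: "\<forall>y<n. \<forall>x<n. B y x \<ge> 0" and "\<exists>y<n. \<exists>x<n. B y x \<noteq> 0"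
    using assms by (auto simp: agreement_matrix_def)
  then obtain y0 x0 where "y0 < n" "x0 < n" "B y0 x0 > 0"
    by (auto simp: less_le)
  then show ?thesis
    unfolding Ssum_def using nonneg
    by (intro sum_pos2[of _ y0] sum_nonneg sum_pos2[of _ x0]) auto
qed

theorem theorem1:
  fixes n :: nat and B :: "nat \<Rightarrow> nat \<Rightarrow> real"
  assumes "n \<ge> 2"
    and "agreement_matrix n B"
    and "0 < HX_plus n B" and "HX_plus n B \<le> HY_plus n B"
  shows "((\<lambda>\<epsilon>. IA n (zero_freed B \<epsilon>)) \<longlongrightarrow>
           1 + (HY_plus n B - HXY_plus n B) / HX_plus n B) (at_right 0)"
proof -
  have "Ssum n B > 0" and "\<And>y x. y < n \<Longrightarrow> x < n \<Longrightarrow> B y x \<ge> 0"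
    using assms(2) by (auto simp: agreement_matrix_Ssum_pos agreement_matrix_def)
  then have HX: "((\<lambda>\<epsilon>. HX n (zero_freed B \<epsilon>)) \<longlongrightarrow> HX_plus n B) (at_right 0)"
    and HY: "((\<lambda>\<epsilon>. HY n (zero_freed B \<epsilon>)) \<longlongrightarrow> HY_plus n B) (at_right 0)"
    and HXY: "((\<lambda>\<epsilon>. HXY n (zero_freed B \<epsilon>)) \<longlongrightarrow> HXY_plus n B) (at_right 0)"
    by (auto intro!: tendsto_HX_HX_plus tendsto_HY_HY_plus tendsto_HXY_HXY_plus
        tendsto_zero_freed eventually_zero_freed_pos)
  have "((\<lambda>\<epsilon>. IA n (zero_freed B \<epsilon>)) \<longlongrightarrow>
      (HX_plus n B + HY_plus n B - HXY_plus n B) / min (HX_plus n B) (HY_plus n B)) (at_right 0)"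
    unfolding IA_def using assms(3,4) by (intro tendsto_intros HX HY HXY) auto
  also have "(HX_plus n B + HY_plus n B - HXY_plus n B) / min (HX_plus n B) (HY_plus n B)
      = 1 + (HY_plus n B - HXY_plus n B) / HX_plus n B"
    using assms(3,4) by (simp add: field_simps)
  finally show ?thesis .
qed

end
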